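(* Let $\bm{H}$ be a random matrix with values in $\mathbb{C}^{N_R\times N_T}$ (flat-fading MIMO channel), let $\lambda_{\max}$ be the maximum eigenvalue of $\bm{H}\bm{H}^\ast$, and let $W>0$, $\rho>0$ be constants. Consider the capacity with full channel side information $$c=W\max_{\bm{R}\succeq 0,\ \operatorname{Tr}[\bm{R}]=N_T}\log_2\det\Big(\bm{I}_{N_R}+\frac{\rho}{N_T}\bm{H}\bm{R}\bm{H}^\ast\Big),$$ where the maximum is over Hermitian positive semidefinite $\bm{R}\in\mathbb{C}^{N_T\times N_T}$, and the capacity with channel side information only at the receiver $$c=W\log_2\det\Big(\bm{I}_{N_R}+\frac{\rho}{N_T}\bm{H}\bm{H}^\ast\Big).$$ If $\mathbb{E}[(1+\lambda_{\max})^\theta]<\infty$ for some $\theta>0$, then the distribution of the capacity (in either case) is light-tailed.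
   Context: A nonnegative random variable $X$ is light-tailed if $\Pr(X>x)=O(e^{-\theta x})$ for some $\theta>0$, equivalently $\mathbb{E}[e^{\theta X}]<\infty$ for some $\theta>0$. Here $W$ is the bandwidth and $\rho=P/(N_0W)$ with $P$ the total average transmit power and $N_0$ the noise power spectral density. *)

theory Defs
  imports "HOL-Probability.Probability" "HOL-Library.Landau_Symbols"
begin

definition conj_tr :: "complex^'n^'m \<Rightarrow> complex^'m^'n" where
  "conj_tr A = (\<chi> i j. cnj (A $ j $ i))"

definition herm_psd :: "complex^'n^'n \<Rightarrow> bool" where
  "herm_psd R \<longleftrightarrow> conj_tr R = R \<and>
     (\<forall>x::complex^'n. 0 \<le> Re (\<Sum>i\<in>UNIV. \<Sum>j\<in>UNIV. cnj (x $ i) * R $ i $ j * x $ j))"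

definition lambda_max :: "complex^'t^'r \<Rightarrow> real" where
  "lambda_max H = Max {l::real. \<exists>v::complex^'r. v \<noteq> 0 \<and>
      (H ** conj_tr H) *v v = complex_of_real l *s v}"

definition cap_full :: "real \<Rightarrow> real \<Rightarrow> complex^'t^'r \<Rightarrow> real" where
  "cap_full W \<rho> H = W * (SUP R \<in> {R::complex^'t^'t. herm_psd R \<and> trace R = of_nat CARD('t)}.
      log 2 (Re (det (mat 1 + (\<rho> / real CARD('t)) *\<^sub>R (H ** R ** conj_tr H)))))"

definition cap_rx :: "real \<Rightarrow> real \<Rightarrow> complex^'t^'r \<Rightarrow> real" where
  "cap_rx W \<rho> H = W *
      log 2 (Re (det (mat 1 + (\<rho> / real CARD('t)) *\<^sub>R (H ** conj_tr H))))"

definition light_tailed :: "'a measure \<Rightarrow> ('a \<Rightarrow> real) \<Rightarrow> bool" where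
  "light_tailed M X \<longleftrightarrow> (\<exists>\<theta>>0. (\<lambda>x. measure M {\<omega>\<in>space M. X \<omega> > x}) \<in> O[at_top](\<lambda>x. exp (- \<theta> * x)))"

end

theory Submission
  imports Defs
begin

text \<open>
  Both capacities are bounded, uniformly in the input covariance \<open>R\<close>, by
  \<open>a + b ln (1 + \<lambda>\<^sub>m\<^sub>a\<^sub>x)\<close>. Indeed \<open>\<bar>H\<^sub>i\<^sub>k\<bar>\<^sup>2 \<le> \<lambda>\<^sub>m\<^sub>a\<^sub>x\<close> by the Rayleigh principle, and a
  positive semidefinite \<open>R\<close> with trace \<open>N\<^sub>T\<close> has entries of modulus at most \<open>2N\<^sub>T\<close>; so every
  entry of \<open>I + (\<rho>/N\<^sub>T) H R H\<^sup>*\<close> is \<open>O((1 + \<lambda>\<^sub>m\<^sub>a\<^sub>x)\<^sup>2)\<close>, and expanding the determinant over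
  permutations gives \<open>\<bar>det\<bar> \<le> C (1 + \<lambda>\<^sub>m\<^sub>a\<^sub>x)\<^bsup>2N\<^sub>R\<^esup>\<close>. The Markov inequality for \<open>(1 + \<lambda>\<^sub>m\<^sub>a\<^sub>x)\<^sup>\<theta>\<close> then gives
  \<open>P(c > x) \<le> E[(1 + \<lambda>\<^sub>m\<^sub>a\<^sub>x)\<^sup>\<theta>] e\<^bsup>\<theta>a/b\<^esup> e\<^bsup>-\<theta>x/b\<^esup>\<close>.
\<close>

lemma hermitian_entry_cnj:
  fixes A :: "complex^'n^'n"
  assumes "conj_tr A = A"
  shows "cnj (A$j$i) = A$i$j"
  using arg_cong[where f = "\<lambda>B. B$i$j", OF assms] by (simp add: conj_tr_def)

lemma inner_matrix_vector_mult_eq_form: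
  fixes A :: "complex^'n^'m"
  shows "inner x (A *v y) = Re (\<Sum>i\<in>UNIV. \<Sum>j\<in>UNIV. cnj (x$i) * A$i$j * y$j)"
proof -
  have inner_complex: "inner a b = Re (cnj a * b)" for a b :: complex
    by (simp add: inner_complex_def)
  show ?thesis
    unfolding inner_vec_def matrix_vector_mult_def inner_complex Re_sum
    by (simp add: sum_distrib_left mult.assoc Re_sum)
qed

lemma hermitian_inner_matrix_vector_mult_commute:
  fixes A :: "complex^'n^'n"
  assumes "conj_tr A = A"
  shows "inner x (A *v y) = inner y (A *v x)"
proof -
  have "inner x (A *v y) = Re (\<Sum>i\<in>UNIV. \<Sum>j\<in>UNIV. cnj (x$i) * A$i$j * y$j)"
    by (rule inner_matrix_vector_mult_eq_form)
  also have "\<dots> = Re (cnj (\<Sum>j\<in>UNIV. \<Sum>i\<in>UNIV. cnj (y$j) * A$j$i * x$i))"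
    by (subst sum.swap) (simp add: cnj_sum hermitian_entry_cnj[OF assms] mult_ac)
  also have "\<dots> = inner y (A *v x)"
    by (simp only: cnj.sel(1) inner_matrix_vector_mult_eq_form)
  finally show ?thesis .
qed

lemma self_adjoint_nonneg_form_null_imp_zero:
  fixes f :: "'a::real_inner \<Rightarrow> 'a"
  assumes lin: "linear f"
    and sym: "\<And>x y. inner x (f y) = inner y (f x)"
    and nonneg: "\<And>x. 0 \<le> inner x (f x)"
    and null: "inner v (f v) = 0"
  shows "f v = 0"
proof -
  define s where "s = inner (f v) (f v)"
  define c where "c = inner (f v) (f (f v))"
  have c0: "0 \<le> c" unfolding c_def by (rule nonneg)
  have along_line: "0 \<le> 2 * t * s + t\<^sup>2 * c" for t
  proof -
    have "0 \<le> inner (v + t *\<^sub>R f v) (f (v + t *\<^sub>R f v))" by (rule nonneg)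
    also have "\<dots> = 2 * t * s + t\<^sup>2 * c"
      using null sym[of v "f v"]
      by (simp add: linear_add[OF lin] linear_scale[OF lin] inner_add_left inner_add_right
          s_def c_def power2_eq_square algebra_simps)
    finally show ?thesis .
  qed
  have "2 * (- s / (c + 1)) * s + (- s / (c + 1))\<^sup>2 * c
      = - (s\<^sup>2 * (c + 2)) / (c + 1)\<^sup>2"
    using c0 by (simp add: divide_simps power2_eq_square) (simp add: algebra_simps)
  then have "s\<^sup>2 * (c + 2) \<le> 0"
    using along_line[of "- s / (c + 1)"] c0 by (simp add: divide_le_0_iff)
  then have "s = 0" using c0 by (simp add: mult_le_0_iff)
  then show ?thesis unfolding s_def by simp
qed

text \<open>A maximiser \<open>v\<close> of the form on the unit sphere is an eigenvector: \<open>\<mu> I - A\<close> is then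
  positive semidefinite with \<open>v\<close> in its null cone, hence in its kernel.\<close>
lemma hermitian_max_eigenvalue:
  fixes A :: "complex^'n^'n"
  assumes herm: "conj_tr A = A"
  obtains \<mu> v where "v \<noteq> 0" "A *v v = \<mu> *\<^sub>R v" "\<And>x. inner x (A *v x) \<le> \<mu> * (norm x)\<^sup>2"
proof -
  define Q where "Q x = inner x (A *v x)" for x :: "complex^'n"
  have "continuous_on (sphere 0 1) Q"
    unfolding Q_def by (intro continuous_intros)
  moreover have "sphere (0::complex^'n) 1 \<noteq> {}" by simp
  ultimately obtain v where v: "v \<in> sphere 0 1"
    and vmax: "\<And>y. y \<in> sphere 0 1 \<Longrightarrow> Q y \<le> Q v"
    using continuous_attains_sup[OF compact_sphere] by blast
  define \<mu> where "\<mu> = Q v"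
  have bound: "Q x \<le> \<mu> * (norm x)\<^sup>2" for x
  proof (cases "x = 0")
    case True
    then show ?thesis by (simp add: Q_def)
  next
    case False
    have "Q ((1 / norm x) *\<^sub>R x) \<le> \<mu>"
      using False vmax unfolding \<mu>_def by simp
    then show ?thesis
      using False by (simp add: Q_def linear_scale power2_eq_square field_simps)
  qed
  have "\<mu> *\<^sub>R v - A *v v = 0"
  proof (rule self_adjoint_nonneg_form_null_imp_zero[where f = "\<lambda>x. \<mu> *\<^sub>R x - A *v x"])
    show "linear (\<lambda>x. \<mu> *\<^sub>R x - A *v x)"
      by (simp add: linear_iff algebra_simps linear_scale[OF matrix_vector_mul_linear])
    show "inner x (\<mu> *\<^sub>R y - A *v y) = inner y (\<mu> *\<^sub>R x - A *v x)" for x y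
      using hermitian_inner_matrix_vector_mult_commute[OF herm, of x y]
      by (simp add: inner_diff_right inner_commute)
    show "0 \<le> inner x (\<mu> *\<^sub>R x - A *v x)" for x
      using bound[of x] by (simp add: Q_def inner_diff_right power2_norm_eq_inner)
    show "inner v (\<mu> *\<^sub>R v - A *v v) = 0"
      using v by (simp add: Q_def \<mu>_def inner_diff_right dot_square_norm)
  qed
  then have "A *v v = \<mu> *\<^sub>R v" by simp
  moreover have "v \<noteq> 0" using v by auto
  ultimately show ?thesis using that bound unfolding Q_def by blast
qed

lemma of_real_vector_scalar_mult: "complex_of_real l *s v = l *\<^sub>R v"
  by (simp add: vec_eq_iff of_real_def)

lemma hermitian_eigenvectors_orthogonal:
  fixes A :: "complex^'n^'n"
  assumes herm: "conj_tr A = A"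
    and u: "A *v u = a *\<^sub>R u" and v: "A *v v = b *\<^sub>R v" and "a \<noteq> b"
  shows "orthogonal u v"
proof -
  have "a * inner v u = b * inner u v"
    using hermitian_inner_matrix_vector_mult_commute[OF herm, of u v] u v by simp
  then have "(a - b) * inner u v = 0" by (simp add: inner_commute algebra_simps)
  then show ?thesis using \<open>a \<noteq> b\<close> by (simp add: orthogonal_def)
qed

lemma finite_hermitian_eigenvalues:
  fixes A :: "complex^'n^'n"
  assumes herm: "conj_tr A = A"
  shows "finite {l::real. \<exists>v. v \<noteq> 0 \<and> A *v v = complex_of_real l *s v}"
    (is "finite ?E")
proof -
  define f where "f l = (SOME v. v \<noteq> 0 \<and> A *v v = l *\<^sub>R v)" for l
  have f: "f l \<noteq> 0 \<and> A *v f l = l *\<^sub>R f l" if "l \<in> ?E" for l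
  proof -
    from that have "\<exists>v. v \<noteq> 0 \<and> A *v v = l *\<^sub>R v" by (simp add: of_real_vector_scalar_mult)
    then show ?thesis unfolding f_def by (rule someI_ex)
  qed
  have "inj_on f ?E"
  proof (rule inj_onI)
    fix a b assume a: "a \<in> ?E" and b: "b \<in> ?E" and eq: "f a = f b"
    have "a *\<^sub>R f a = A *v f a" using f[OF a] by simp
    also have "\<dots> = b *\<^sub>R f a" unfolding eq using f[OF b] by simp
    finally have "a *\<^sub>R f a = b *\<^sub>R f a" .
    then show "a = b" using f[OF a] by (simp add: scaleR_cancel_right)
  qed
  moreover have "independent (f ` ?E)"
  proof (rule pairwise_orthogonal_independent)
    show "pairwise orthogonal (f ` ?E)"
    proof (rule pairwiseI)
      fix x y assume "x \<in> f ` ?E" "y \<in> f ` ?E" "x \<noteq> y"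
      then obtain a b where a: "a \<in> ?E" and b: "b \<in> ?E" and xy: "x = f a" "y = f b"
        and "a \<noteq> b" by blast
      show "orthogonal x y"
        unfolding xy using f[OF a] f[OF b] \<open>a \<noteq> b\<close>
        by (intro hermitian_eigenvectors_orthogonal[OF herm]) simp_all
    qed
    show "0 \<notin> f ` ?E" using f by force
  qed
  then have "finite (f ` ?E)" using independent_bound by blast
  ultimately show ?thesis using finite_image_iff by blast
qed

lemma hermitian_mult_conj_tr: "conj_tr (H ** conj_tr H) = H ** conj_tr H"
  by (simp add: vec_eq_iff conj_tr_def matrix_matrix_mult_def cnj_sum mult.commute)

text \<open>The diagonal entry \<open>(H H\<^sup>*)\<^sub>i\<^sub>i = \<Sum>\<^sub>j \<bar>H\<^sub>i\<^sub>j\<bar>\<^sup>2\<close> is a Rayleigh quotient,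
  hence at most \<open>\<lambda>\<^sub>m\<^sub>a\<^sub>x\<close>.\<close>
lemma norm_entry_square_le_lambda_max:
  fixes H :: "complex^'t^'r"
  shows "(norm (H$i$k))\<^sup>2 \<le> lambda_max H"
proof -
  let ?A = "H ** conj_tr H"
  obtain \<mu> v where "v \<noteq> 0" "?A *v v = \<mu> *\<^sub>R v"
    and rayleigh: "\<And>x. inner x (?A *v x) \<le> \<mu> * (norm x)\<^sup>2"
    using hermitian_max_eigenvalue[OF hermitian_mult_conj_tr] by blast
  then have "\<mu> \<le> lambda_max H"
    unfolding lambda_max_def
    by (intro Max_ge finite_hermitian_eigenvalues hermitian_mult_conj_tr)
      (auto simp: of_real_vector_scalar_mult)
  have "(\<Sum>j\<in>UNIV. (norm (H$i$j))\<^sup>2) = Re (?A $ i $ i)"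
    by (simp add: matrix_matrix_mult_def conj_tr_def Re_sum complex_mult_cnj cmod_power2)
  also have "\<dots> = inner (axis i 1) (?A *v axis i 1)"
    unfolding inner_axis' complex_inner_1
    by (simp add: matrix_vector_mult_def axis_def if_distrib cong: if_cong)
  also have "\<dots> \<le> \<mu>"
    using rayleigh[of "axis i 1"] by (simp add: power2_norm_eq_inner inner_axis')
  finally have "(\<Sum>j\<in>UNIV. (norm (H$i$j))\<^sup>2) \<le> \<mu>" .
  moreover have "(norm (H$i$k))\<^sup>2 \<le> (\<Sum>j\<in>UNIV. (norm (H$i$j))\<^sup>2)"
    by (rule member_le_sum) auto
  ultimately show ?thesis using \<open>\<mu> \<le> lambda_max H\<close> by linarith
qed

lemma lambda_max_nonneg: "0 \<le> lambda_max H"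
  using norm_entry_square_le_lambda_max[of H undefined undefined]
  by (meson order_trans zero_le_power2)

lemma norm_entry_le_one_plus_lambda_max: "norm (H$i$k) \<le> 1 + lambda_max H"
proof (cases "norm (H$i$k) \<le> 1")
  case True
  then show ?thesis using lambda_max_nonneg[of H] by simp
next
  case False
  then have "norm (H$i$k) \<le> (norm (H$i$k))\<^sup>2"
    using mult_left_mono[of 1 "norm (H$i$k)" "norm (H$i$k)"] by (simp add: power2_eq_square)
  then show ?thesis using norm_entry_square_le_lambda_max[of H i k] by simp
qed

lemma herm_psd_two_point_form:
  fixes R :: "complex^'n^'n"
  assumes "herm_psd R"
  shows "0 \<le> Re (cnj a * R$k$k * a + cnj a * R$k$l * b + cnj b * R$l$k * a + cnj b * R$l$l * b)"
proof -
  define x :: "complex^'n"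
    where "x = (\<chi> i. (if i = k then a else 0) + (if i = l then b else 0))"
  have row: "(\<Sum>j\<in>UNIV. c * R$i$j * x$j) = c * R$i$k * a + c * R$i$l * b" for c i
    unfolding x_def
    by (simp add: distrib_left sum.distrib if_distrib[where f = "\<lambda>y. _ * y"] cong: if_cong)
  have "(\<Sum>i\<in>UNIV. \<Sum>j\<in>UNIV. cnj (x$i) * R$i$j * x$j)
      = cnj a * R$k$k * a + cnj a * R$k$l * b + cnj b * R$l$k * a + cnj b * R$l$l * b"
    unfolding row unfolding x_def
    by (simp add: distrib_left distrib_right sum.distrib if_distrib[where f = cnj]
        if_distrib[where f = "\<lambda>y. y * _"] cong: if_cong)
  moreover have "0 \<le> Re (\<Sum>i\<in>UNIV. \<Sum>j\<in>UNIV. cnj (x$i) * R$i$j * x$j)"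
    using assms unfolding herm_psd_def by blast
  ultimately show ?thesis by simp
qed

lemma herm_psd_diag_nonneg: "herm_psd R \<Longrightarrow> 0 \<le> Re (R$i$i)"
  using herm_psd_two_point_form[where a = 1 and b = 0 and k = i and l = i] by simp

lemma herm_psd_entry_norm_le:
  fixes R :: "complex^'n^'n"
  assumes psd: "herm_psd R"
  shows "norm (R$k$l) \<le> Re (R$k$k) + Re (R$l$l)"
proof -
  have lk: "R$l$k = cnj (R$k$l)"
    using psd unfolding herm_psd_def by (simp add: hermitian_entry_cnj)
  have "0 \<le> Re (R$k$k) + Re (R$l$l) + 2 * Re (R$k$l)"
       "0 \<le> Re (R$k$k) + Re (R$l$l) - 2 * Re (R$k$l)"
       "0 \<le> Re (R$k$k) + Re (R$l$l) - 2 * Im (R$k$l)"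
       "0 \<le> Re (R$k$k) + Re (R$l$l) + 2 * Im (R$k$l)"
    using herm_psd_two_point_form[OF psd, where a = 1 and k = k and l = l, of 1]
      herm_psd_two_point_form[OF psd, where a = 1 and k = k and l = l, of "-1"]
      herm_psd_two_point_form[OF psd, where a = 1 and k = k and l = l, of "\<i>"]
      herm_psd_two_point_form[OF psd, where a = 1 and k = k and l = l, of "-\<i>"]
    by (simp_all add: lk)
  then have "\<bar>Re (R$k$l)\<bar> + \<bar>Im (R$k$l)\<bar> \<le> Re (R$k$k) + Re (R$l$l)" by linarith
  then show ?thesis using cmod_le[of "R$k$l"] by linarith
qed

lemma herm_psd_entry_norm_le_trace:
  fixes R :: "complex^'n^'n"
  assumes psd: "herm_psd R"
  shows "norm (R$k$l) \<le> 2 * Re (trace R)"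
proof -
  have diag: "Re (R$i$i) \<le> Re (trace R)" for i
    unfolding trace_def Re_sum
    by (rule member_le_sum) (auto intro: herm_psd_diag_nonneg[OF psd])
  show ?thesis using herm_psd_entry_norm_le[OF psd, of k l] diag[of k] diag[of l] by linarith
qed

lemma herm_psd_mat_1: "herm_psd (mat 1 :: complex^'n^'n)"
proof -
  have "(\<Sum>i\<in>UNIV. \<Sum>j\<in>UNIV. cnj (x$i) * (mat 1 :: complex^'n^'n)$i$j * x$j)
      = (\<Sum>i\<in>UNIV. cnj (x$i) * x$i)" for x :: "complex^'n"
    by (simp add: mat_def if_distrib[where f = "\<lambda>y. _ * y"] if_distrib[where f = "\<lambda>y. y * _"]
        cong: if_cong)
  then show ?thesis
    unfolding herm_psd_def
    by (simp add: vec_eq_iff conj_tr_def mat_def Re_sum sum_nonneg mult.commute[of "cnj _"]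
        complex_mult_cnj)
qed

lemma norm_det_le:
  fixes A :: "'a::real_normed_field^'n^'n"
  assumes entry: "\<And>i j. norm (A$i$j) \<le> K"
  shows "norm (det A) \<le> fact CARD('n) * K ^ CARD('n)"
proof -
  let ?P = "{p. p permutes (UNIV::'n set)}"
  have "norm (det A) \<le> (\<Sum>p\<in>?P. norm (of_int (sign p) * (\<Prod>i\<in>UNIV. A$i$p i)))"
    unfolding det_def by (rule norm_sum)
  also have "\<dots> \<le> (\<Sum>p\<in>?P. K ^ CARD('n))"
  proof (rule sum_mono)
    fix p :: "'n \<Rightarrow> 'n"
    have "norm (of_int (sign p) * (\<Prod>i\<in>UNIV. A$i$p i)) = (\<Prod>i\<in>UNIV. norm (A$i$p i))"
      by (simp add: norm_mult prod_norm sign_def)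
    also have "\<dots> \<le> (\<Prod>i\<in>(UNIV::'n set). K)"
      by (rule prod_mono) (simp add: entry)
    finally show "norm (of_int (sign p) * (\<Prod>i\<in>UNIV. A$i$p i)) \<le> K ^ CARD('n)" by simp
  qed
  also have "\<dots> = fact CARD('n) * K ^ CARD('n)"
    by (simp add: card_permutations)
  finally show ?thesis .
qed

lemma norm_entry_mult_mult_conj_tr_le:
  fixes H :: "complex^'t^'r" and R :: "complex^'t^'t"
  assumes H: "\<And>i k. norm (H$i$k) \<le> L" and R: "\<And>k l. norm (R$k$l) \<le> B"
  shows "norm ((H ** R ** conj_tr H) $ i $ j) \<le> real CARD('t) ^ 2 * L\<^sup>2 * B"
proof -
  have L0: "0 \<le> L" using H norm_ge_zero order_trans by blast
  have B0: "0 \<le> B" using R norm_ge_zero order_trans by blast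
  have "(H ** R ** conj_tr H) $ i $ j = (\<Sum>l\<in>UNIV. \<Sum>k\<in>UNIV. H$i$k * R$k$l * cnj (H$j$l))"
    by (simp add: matrix_matrix_mult_def conj_tr_def sum_distrib_right)
  also have "norm \<dots> \<le> (\<Sum>l\<in>UNIV. \<Sum>k\<in>UNIV. norm (H$i$k) * norm (R$k$l) * norm (H$j$l))"
    by (rule order_trans[OF norm_sum sum_mono[OF order_trans[OF norm_sum]]])
      (simp add: norm_mult)
  also have "\<dots> \<le> (\<Sum>l\<in>(UNIV::'t set). \<Sum>k\<in>(UNIV::'t set). L * B * L)"
    by (intro sum_mono mult_mono H R) (auto simp: L0 B0)
  finally show ?thesis by (simp add: power2_eq_square mult_ac)
qed

definition det_growth_const :: "real \<Rightarrow> nat \<Rightarrow> nat \<Rightarrow> real" where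
  "det_growth_const \<rho> t r = fact r * (1 + 2 * \<rho> * real t ^ 2) ^ r"

lemma det_growth_const_ge_1: "0 \<le> \<rho> \<Longrightarrow> 1 \<le> det_growth_const \<rho> t r"
  unfolding det_growth_const_def
  using mult_mono[of 1 "fact r" 1 "(1 + 2 * \<rho> * real t ^ 2) ^ r"] by (simp add: one_le_power)

lemma norm_det_capacity_matrix_le:
  fixes H :: "complex^'t^'r" and R :: "complex^'t^'t"
  assumes psd: "herm_psd R" and tr: "trace R = of_nat CARD('t)" and "0 \<le> \<rho>"
  shows "norm (det (mat 1 + (\<rho> / real CARD('t)) *\<^sub>R (H ** R ** conj_tr H)))
    \<le> det_growth_const \<rho> CARD('t) CARD('r) * (1 + lambda_max H) ^ (2 * CARD('r))"
proof -
  define N where "N = real CARD('t)"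
  define L where "L = 1 + lambda_max H"
  have N0: "0 < N" unfolding N_def by simp
  have L1: "1 \<le> L" unfolding L_def using lambda_max_nonneg[of H] by simp
  have H: "norm (H$i$k) \<le> L" for i k
    unfolding L_def by (rule norm_entry_le_one_plus_lambda_max)
  have R: "norm (R$k$l) \<le> 2 * N" for k l
    using herm_psd_entry_norm_le_trace[OF psd, of k l] tr by (simp add: N_def)
  have entry: "norm ((mat 1 + (\<rho> / N) *\<^sub>R (H ** R ** conj_tr H)) $ i $ j)
      \<le> (1 + 2 * \<rho> * N\<^sup>2) * L\<^sup>2" for i j
  proof -
    have "norm ((mat 1 + (\<rho> / N) *\<^sub>R (H ** R ** conj_tr H)) $ i $ j)
        \<le> norm (mat 1 $ i $ j :: complex) + \<rho> / N * norm ((H ** R ** conj_tr H) $ i $ j)"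
      using norm_triangle_ineq[of "mat 1 $ i $ j :: complex"
          "((\<rho> / N) *\<^sub>R (H ** R ** conj_tr H)) $ i $ j"] \<open>0 \<le> \<rho>\<close> N0
      by simp
    also have "\<dots> \<le> 1 + \<rho> / N * (N\<^sup>2 * L\<^sup>2 * (2 * N))"
      using norm_entry_mult_mult_conj_tr_le[OF H R, of i j] \<open>0 \<le> \<rho>\<close> N0
      by (intro add_mono mult_left_mono) (auto simp: mat_def N_def)
    also have "\<dots> = 1 + 2 * \<rho> * N\<^sup>2 * L\<^sup>2"
      using N0 by (simp add: power2_eq_square field_simps)
    also have "\<dots> \<le> (1 + 2 * \<rho> * N\<^sup>2) * L\<^sup>2"
      using L1 by (simp add: algebra_simps one_le_power)
    finally show ?thesis .
  qed
  have "norm (det (mat 1 + (\<rho> / N) *\<^sub>R (H ** R ** conj_tr H)))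
      \<le> fact CARD('r) * ((1 + 2 * \<rho> * N\<^sup>2) * L\<^sup>2) ^ CARD('r)"
    by (rule norm_det_le[OF entry])
  also have "\<dots> = det_growth_const \<rho> CARD('t) CARD('r) * L ^ (2 * CARD('r))"
    by (simp add: det_growth_const_def N_def power_mult_distrib power_mult)
  finally show ?thesis unfolding N_def L_def .
qed

text \<open>Only \<open>\<bar>x\<bar>\<close> matters: for real \<open>x \<noteq> 0\<close>, \<open>ln x = ln \<bar>x\<bar>\<close>, and \<open>ln 0 = 0\<close>.\<close>
lemma log_le_log_of_abs_le:
  fixes x y :: real
  assumes "1 < b" and "\<bar>x\<bar> \<le> y" and "1 \<le> y"
  shows "log b x \<le> log b y"
proof (cases "x = 0")
  case True
  have "log b 0 = 0" by (simp add: log_def)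
  then show ?thesis using True assms by simp
next
  case False
  have "log b x = log b \<bar>x\<bar>" by (simp add: log_def abs_if ln_minus)
  also have "\<dots> \<le> log b y" using assms False by simp
  finally show ?thesis .
qed

lemma log_det_capacity_matrix_le:
  fixes H :: "complex^'t^'r" and R :: "complex^'t^'t"
  assumes "herm_psd R" and "trace R = of_nat CARD('t)" and "0 \<le> \<rho>"
  shows "log 2 (Re (det (mat 1 + (\<rho> / real CARD('t)) *\<^sub>R (H ** R ** conj_tr H))))
    \<le> log 2 (det_growth_const \<rho> CARD('t) CARD('r))
        + 2 * real CARD('r) * log 2 (1 + lambda_max H)"
proof -
  let ?C = "det_growth_const \<rho> CARD('t) CARD('r)" and ?L = "1 + lambda_max H"
  have C1: "1 \<le> ?C" using \<open>0 \<le> \<rho>\<close> by (rule det_growth_const_ge_1)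
  have L1: "1 \<le> ?L" using lambda_max_nonneg[of H] by simp
  let ?D = "det (mat 1 + (\<rho> / real CARD('t)) *\<^sub>R (H ** R ** conj_tr H))"
  have "log 2 (Re ?D) \<le> log 2 (?C * ?L ^ (2 * CARD('r)))"
  proof (rule log_le_log_of_abs_le)
    show "\<bar>Re ?D\<bar> \<le> ?C * ?L ^ (2 * CARD('r))"
      using abs_Re_le_cmod norm_det_capacity_matrix_le[OF assms] by (rule order_trans)
    have "1 \<le> ?L ^ (2 * CARD('r))" using L1 by (rule one_le_power)
    with C1 show "1 \<le> ?C * ?L ^ (2 * CARD('r))" using mult_mono[of 1 ?C 1] by simp
  qed simp
  also have "\<dots> = log 2 ?C + 2 * real CARD('r) * log 2 ?L"
    using C1 L1 by (simp add: log_mult log_nat_power)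
  finally show ?thesis .
qed

lemma cap_full_le:
  fixes H :: "complex^'t^'r"
  assumes "0 \<le> W" and "0 \<le> \<rho>"
  shows "cap_full W \<rho> H
    \<le> W * (log 2 (det_growth_const \<rho> CARD('t) CARD('r))
        + 2 * real CARD('r) * log 2 (1 + lambda_max H))"
  unfolding cap_full_def using assms herm_psd_mat_1 trace_I
  by (intro mult_left_mono cSUP_least) (auto simp: log_det_capacity_matrix_le)

lemma cap_rx_le_cap_full:
  fixes H :: "complex^'t^'r"
  assumes "0 \<le> W" and "0 \<le> \<rho>"
  shows "cap_rx W \<rho> H \<le> cap_full W \<rho> H"
proof -
  let ?S = "{R::complex^'t^'t. herm_psd R \<and> trace R = of_nat CARD('t)}"
  let ?f = "\<lambda>R. log 2 (Re (det (mat 1 + (\<rho> / real CARD('t)) *\<^sub>R (H ** R ** conj_tr H))))"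
  have "bdd_above (?f ` ?S)"
  proof (rule bdd_aboveI2)
    show "?f R \<le> log 2 (det_growth_const \<rho> CARD('t) CARD('r))
        + 2 * real CARD('r) * log 2 (1 + lambda_max H)" if "R \<in> ?S" for R
      using that log_det_capacity_matrix_le \<open>0 \<le> \<rho>\<close> by blast
  qed
  then have "?f (mat 1) \<le> (SUP R\<in>?S. ?f R)"
    by (rule cSUP_upper[rotated]) (simp add: herm_psd_mat_1 trace_I)
  then show ?thesis
    unfolding cap_rx_def cap_full_def using \<open>0 \<le> W\<close>
    by (simp add: matrix_mul_rid mult_left_mono)
qed

lemma light_tailed_if_le_log:
  fixes X Y :: "'a \<Rightarrow> real"
  assumes "prob_space M"
    and moment: "integrable M (\<lambda>\<omega>. Y \<omega> powr \<theta>)" and "0 < \<theta>" and "0 < b"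
    and Y_pos: "\<And>\<omega>. \<omega> \<in> space M \<Longrightarrow> 0 < Y \<omega>"
    and X_le: "\<And>\<omega>. \<omega> \<in> space M \<Longrightarrow> X \<omega> \<le> a + b * ln (Y \<omega>)"
  shows "light_tailed M X"
proof -
  interpret prob_space M by fact
  define k where "k = \<theta> / b"
  define E where "E = (\<integral>\<omega>. Y \<omega> powr \<theta> \<partial>M)"
  have "0 < k" unfolding k_def using \<open>0 < \<theta>\<close> \<open>0 < b\<close> by simp
  have tail: "measure M {\<omega>\<in>space M. X \<omega> > x} \<le> E * exp (k * a) * exp (- k * x)" for x
  proof -
    let ?T = "{\<omega>\<in>space M. exp (k * (x - a)) \<le> Y \<omega> powr \<theta>}"
    have "{\<omega>\<in>space M. X \<omega> > x} \<subseteq> ?T"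
    proof safe
      fix \<omega> assume \<omega>: "\<omega> \<in> space M" and "x < X \<omega>"
      then have "\<theta> * (x - a) < \<theta> * (b * ln (Y \<omega>))"
        using X_le[OF \<omega>] \<open>0 < \<theta>\<close> by simp
      then have "k * (x - a) < \<theta> * ln (Y \<omega>)"
        using \<open>0 < b\<close> by (simp add: k_def field_simps)
      then show "exp (k * (x - a)) \<le> Y \<omega> powr \<theta>"
        using Y_pos[OF \<omega>] by (simp add: powr_def mult.commute)
    qed
    moreover have "?T \<in> sets M" using moment by measurable
    ultimately have "measure M {\<omega>\<in>space M. X \<omega> > x} \<le> measure M ?T"
      by (rule finite_measure_mono)
    also have "\<dots> \<le> E / exp (k * (x - a))"
      unfolding E_def by (rule integral_Markov_inequality_measure[OF moment, of "space M"]) auto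
    also have "\<dots> = E * exp (k * a) * exp (- k * x)"
      by (simp add: exp_diff exp_minus field_simps)
    finally show ?thesis .
  qed
  have "(\<lambda>x. measure M {\<omega>\<in>space M. X \<omega> > x}) \<in> O[at_top](\<lambda>x. exp (- k * x))"
    using tail by (intro bigoI[where c = "E * exp (k * a)"] always_eventually) simp
  then show ?thesis unfolding light_tailed_def using \<open>0 < k\<close> by blast
qed

theorem theorem1:
  fixes M :: "'a measure" and H :: "'a \<Rightarrow> complex^'t::finite^'r::finite"
    and W \<rho> \<theta> :: real
  assumes "prob_space M"
    and "H \<in> borel_measurable M"
    and "W > 0" and "\<rho> > 0"
    and "\<theta> > 0"
    and "integrable M (\<lambda>\<omega>. (1 + lambda_max (H \<omega>)) powr \<theta>)"
  shows "light_tailed M (\<lambda>\<omega>. cap_full W \<rho> (H \<omega>)) \<and> light_tailed M (\<lambda>\<omega>. cap_rx W \<rho> (H \<omega>))"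
proof -
  define a where "a = W * log 2 (det_growth_const \<rho> CARD('t) CARD('r))"
  define b where "b = 2 * W * real CARD('r) / ln 2"
  have "0 < b" unfolding b_def using \<open>W > 0\<close> by simp
  have pos: "0 < 1 + lambda_max h" for h :: "complex^'t^'r"
    using lambda_max_nonneg[of h] by simp
  have full: "cap_full W \<rho> h \<le> a + b * ln (1 + lambda_max h)" for h :: "complex^'t^'r"
    using cap_full_le[of W \<rho> h] \<open>W > 0\<close> \<open>\<rho> > 0\<close>
    by (simp add: a_def b_def log_def algebra_simps)
  have rx: "cap_rx W \<rho> h \<le> a + b * ln (1 + lambda_max h)" for h :: "complex^'t^'r"
    using cap_rx_le_cap_full[of W \<rho> h] full[of h] \<open>W > 0\<close> \<open>\<rho> > 0\<close> by simp
  note tail = light_tailed_if_le_log[OF assms(1,6,5) \<open>0 < b\<close> pos, where a = a]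
  show ?thesis using tail[OF full] tail[OF rx] by blast
qed

end
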